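(* Let $G^*=(V,E^* )$ be the true causal DAG and let $G=(V,E)$ be a superstructure for $G^*$. Let $\{S_1,\dots,S_N\}$ be a vertex-covering partition of $V$ (i.e. $\bigcup_i S_i=V$). Then its causal expansion $\{S'_1,\dots,S'_N\}$, where $S'_i=S_i\cup\partial_{\mathrm{out}}(S_i)$, is a causal partition with respect to $G$ and $G^*$.
   Context: Superstructure: an undirected graph $G=(V,E)$ such that every pair of vertices adjacent in $G^*$ is adjacent in $G$. Outer vertex boundary: $\partial_{\mathrm{out}}(S)=\{v\in V\setminus S:\exists u\in S\text{ with } u,v \text{ adjacent in } G\}$. Setting: random variables correspond to the vertices of $G^*$, their joint distribution $P$ factorizes according to $G^*$ and is faithful to it; $X_S$ is the (infinite-sample) data on $S\subseteq V$. A collider on a path is a non-endpoint vertex whose two incident path edges both have an arrowhead at it. For $L\subset V$, an inducing path relative to $L$ between $u$ and $v$ in $G^*$ is a path $(u,q_1,\dots,q_k,v)$ in which every non-endpoint vertex lying in $V\setminus L$ is a collider on the path and an ancestor in $G^*$ of $u$ or $v$. A MAG is a mixed graph (directed and bi-directed edges) with no directed or almost directed cycles and no inducing path between non-adjacent vertices; its Markov equivalence class $[M]$ consists of MAGs with the same $m$-separations, and $PAG[M]$ has the same adjacencies as $M$ with arrowhead/tail marks where shared by all of $[M]$ and circle marks otherwise. The latent MAG $L^{\mathrm{MAG}}(G^*,S)$ on $S$ has $u,v\in S$ adjacent iff there is an inducing path relative to $V\setminus S$ between them in $G^*$, oriented $u\to v$ if $u$ is an ancestor of $v$ in $G^*$,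 $v\to u$ if $v$ is an ancestor of $u$, and $u\leftrightarrow v$ otherwise. Consistent PAG Learner Assumption: $\mathscr{A}$ is a structure learner such that for every $S\subseteq V$, when $P$ is faithful, in the infinite data limit $\mathscr{A}(X_S)=PAG[L^{\mathrm{MAG}}(G^*,S)]$. Causal partition: an overlapping family $\{S'_1,\dots,S'_N\}$ of subsets of $V$ is causal with respect to $G$ and $G^*$ if, for any learner $\mathscr{A}$ satisfying the assumption above: (i) for every edge $\{u,v\}$ of $G$ some $S'_i\supseteq\{u,v\}$; (ii) for any $u,v$ non-adjacent in $G^*$ but adjacent in $G$, there is some $S'_i$ with $u,v\in S'_i$ such that $\mathscr{A}(X_{S'_i})$ has no edge between $u$ and $v$; (iii) for any unshielded collider $u\to v\leftarrow w$ in $G^*$ ($u,w$ non-adjacent) there is some $S'_i$ with $\{u,v,w\}\subseteq S'_i$. *)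

theory Defs
  imports Main
begin

text \<open>A DAG on vertex set V is given by a directed edge relation D (D u v means u -> v).\<close>

definition dag :: "'v set \<Rightarrow> ('v \<Rightarrow> 'v \<Rightarrow> bool) \<Rightarrow> bool" where
  "dag V D \<longleftrightarrow> finite V \<and> (\<forall>u v. D u v \<longrightarrow> u \<in> V \<and> v \<in> V) \<and> (\<forall>u. \<not> D\<^sup>+\<^sup>+ u u)"

definition dag_adj :: "('v \<Rightarrow> 'v \<Rightarrow> bool) \<Rightarrow> 'v \<Rightarrow> 'v \<Rightarrow> bool" where
  "dag_adj D u v \<longleftrightarrow> D u v \<or> D v u"

definition dag_anc :: "('v \<Rightarrow> 'v \<Rightarrow> bool) \<Rightarrow> 'v \<Rightarrow> 'v \<Rightarrow> bool" where
  "dag_anc D a b \<longleftrightarrow> D\<^sup>*\<^sup>* a b"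

definition is_path :: "('v \<Rightarrow> 'v \<Rightarrow> bool) \<Rightarrow> 'v \<Rightarrow> 'v \<Rightarrow> 'v list \<Rightarrow> bool" where
  "is_path adj u v p \<longleftrightarrow> length p \<ge> 2 \<and> distinct p \<and> hd p = u \<and> last p = v \<and>
     (\<forall>i. Suc i < length p \<longrightarrow> adj (p ! i) (p ! Suc i))"

definition dag_collider :: "('v \<Rightarrow> 'v \<Rightarrow> bool) \<Rightarrow> 'v list \<Rightarrow> nat \<Rightarrow> bool" where
  "dag_collider D p i \<longleftrightarrow> 0 < i \<and> Suc i < length p \<and> D (p ! (i - 1)) (p ! i) \<and> D (p ! Suc i) (p ! i)"

definition dag_inducing_path :: "'v set \<Rightarrow> ('v \<Rightarrow> 'v \<Rightarrow> bool) \<Rightarrow> 'v set \<Rightarrow> 'v \<Rightarrow> 'v \<Rightarrow> 'v list \<Rightarrow> bool" where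
  "dag_inducing_path V D L u v p \<longleftrightarrow> is_path (dag_adj D) u v p \<and> set p \<subseteq> V \<and>
     (\<forall>i. 0 < i \<and> Suc i < length p \<longrightarrow> p ! i \<notin> L \<longrightarrow>
        dag_collider D p i \<and> (dag_anc D (p ! i) u \<or> dag_anc D (p ! i) v))"

datatype mark = Tail | Arrow | Circle

text \<open>A mixed graph is represented by its edge-mark function: M u v = Some m means
  u and v are adjacent and the mark at the v-end of the edge is m; M u v = None
  means u and v are not adjacent.\<close>
type_synonym 'v mgraph = "'v \<Rightarrow> 'v \<Rightarrow> mark option"

definition madj :: "'v mgraph \<Rightarrow> 'v \<Rightarrow> 'v \<Rightarrow> bool" where
  "madj M u v \<longleftrightarrow> M u v \<noteq> None"

definition mdir :: "'v mgraph \<Rightarrow> 'v \<Rightarrow> 'v \<Rightarrow> bool" where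
  "mdir M u v \<longleftrightarrow> M u v = Some Arrow \<and> M v u = Some Tail"

definition mbidir :: "'v mgraph \<Rightarrow> 'v \<Rightarrow> 'v \<Rightarrow> bool" where
  "mbidir M u v \<longleftrightarrow> M u v = Some Arrow \<and> M v u = Some Arrow"

definition manc :: "'v mgraph \<Rightarrow> 'v \<Rightarrow> 'v \<Rightarrow> bool" where
  "manc M a b \<longleftrightarrow> (mdir M)\<^sup>*\<^sup>* a b"

definition mixed_graph :: "'v set \<Rightarrow> 'v mgraph \<Rightarrow> bool" where
  "mixed_graph S M \<longleftrightarrow>
     (\<forall>u v. M u v \<noteq> None \<longrightarrow> u \<in> S \<and> v \<in> S \<and> u \<noteq> v) \<and>
     (\<forall>u v. M u v \<noteq> None \<longleftrightarrow> M v u \<noteq> None) \<and>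
     (\<forall>u v. madj M u v \<longrightarrow> mdir M u v \<or> mdir M v u \<or> mbidir M u v)"

definition mcollider :: "'v mgraph \<Rightarrow> 'v list \<Rightarrow> nat \<Rightarrow> bool" where
  "mcollider M p i \<longleftrightarrow> 0 < i \<and> Suc i < length p \<and>
     M (p ! (i - 1)) (p ! i) = Some Arrow \<and> M (p ! Suc i) (p ! i) = Some Arrow"

definition m_inducing_path :: "'v mgraph \<Rightarrow> 'v \<Rightarrow> 'v \<Rightarrow> 'v list \<Rightarrow> bool" where
  "m_inducing_path M u v p \<longleftrightarrow> is_path (madj M) u v p \<and>
     (\<forall>i. 0 < i \<and> Suc i < length p \<longrightarrow> mcollider M p i \<and> (manc M (p ! i) u \<or> manc M (p ! i) v))"

text \<open>Maximal ancestral graph: no directed cycles, no almost directed cycles, and no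
  inducing path between non-adjacent vertices.\<close>
definition mag :: "'v set \<Rightarrow> 'v mgraph \<Rightarrow> bool" where
  "mag S M \<longleftrightarrow> mixed_graph S M \<and>
     (\<forall>u. \<not> (mdir M)\<^sup>+\<^sup>+ u u) \<and>
     (\<forall>u v. mbidir M u v \<longrightarrow> \<not> manc M u v) \<and>
     (\<forall>u v p. u \<noteq> v \<and> \<not> madj M u v \<longrightarrow> \<not> m_inducing_path M u v p)"

definition m_connecting :: "'v mgraph \<Rightarrow> 'v set \<Rightarrow> 'v \<Rightarrow> 'v \<Rightarrow> 'v list \<Rightarrow> bool" where
  "m_connecting M Z u v p \<longleftrightarrow> is_path (madj M) u v p \<and>
     (\<forall>i. 0 < i \<and> Suc i < length p \<longrightarrow>
        (mcollider M p i \<longrightarrow> (\<exists>z\<in>Z. manc M (p ! i) z)) \<and>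
        (\<not> mcollider M p i \<longrightarrow> p ! i \<notin> Z))"

definition m_separated :: "'v mgraph \<Rightarrow> 'v \<Rightarrow> 'v \<Rightarrow> 'v set \<Rightarrow> bool" where
  "m_separated M u v Z \<longleftrightarrow> (\<forall>p. \<not> m_connecting M Z u v p)"

definition markov_equiv :: "'v set \<Rightarrow> 'v mgraph \<Rightarrow> 'v mgraph \<Rightarrow> bool" where
  "markov_equiv S M M' \<longleftrightarrow>
     (\<forall>u v Z. u \<in> S \<and> v \<in> S \<and> u \<noteq> v \<and> Z \<subseteq> S - {u, v} \<longrightarrow>
        (m_separated M u v Z \<longleftrightarrow> m_separated M' u v Z))"

definition pag :: "'v set \<Rightarrow> 'v mgraph \<Rightarrow> 'v mgraph" where
  "pag S M = (\<lambda>u v. case M u v of None \<Rightarrow> None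
     | Some m \<Rightarrow> (if (\<forall>M'. mag S M' \<and> markov_equiv S M M' \<longrightarrow> M' u v = Some m)
                  then Some m else Some Circle))"

definition latent_mag :: "'v set \<Rightarrow> ('v \<Rightarrow> 'v \<Rightarrow> bool) \<Rightarrow> 'v set \<Rightarrow> 'v mgraph" where
  "latent_mag V D S = (\<lambda>u v.
     if u \<in> S \<and> v \<in> S \<and> u \<noteq> v \<and> (\<exists>p. dag_inducing_path V D (V - S) u v p)
     then (if dag_anc D v u then Some Tail else Some Arrow)
     else None)"

text \<open>A structure learner, in the infinite-data limit, is modelled as the map sending a
  variable subset S to the graph it outputs on the data X_S.\<close>
definition consistent_pag_learner :: "'v set \<Rightarrow> ('v \<Rightarrow> 'v \<Rightarrow> bool) \<Rightarrow> ('v set \<Rightarrow> 'v mgraph) \<Rightarrow> bool" where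
  "consistent_pag_learner V D A \<longleftrightarrow> (\<forall>S. S \<subseteq> V \<longrightarrow> A S = pag S (latent_mag V D S))"

definition superstructure :: "'v set \<Rightarrow> ('v \<Rightarrow> 'v \<Rightarrow> bool) \<Rightarrow> ('v \<Rightarrow> 'v \<Rightarrow> bool) \<Rightarrow> bool" where
  "superstructure V E D \<longleftrightarrow> (\<forall>u v. E u v \<longrightarrow> u \<in> V \<and> v \<in> V \<and> u \<noteq> v) \<and>
     (\<forall>u v. E u v \<longleftrightarrow> E v u) \<and> (\<forall>u v. dag_adj D u v \<longrightarrow> E u v)"

definition out_boundary :: "'v set \<Rightarrow> ('v \<Rightarrow> 'v \<Rightarrow> bool) \<Rightarrow> 'v set \<Rightarrow> 'v set" where
  "out_boundary V E S = {v \<in> V - S. \<exists>u\<in>S. E u v}"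

definition causal_partition ::
  "'v set \<Rightarrow> ('v \<Rightarrow> 'v \<Rightarrow> bool) \<Rightarrow> ('v \<Rightarrow> 'v \<Rightarrow> bool) \<Rightarrow> nat \<Rightarrow> (nat \<Rightarrow> 'v set) \<Rightarrow> bool" where
  "causal_partition V E D N S' \<longleftrightarrow>
     (\<forall>A. consistent_pag_learner V D A \<longrightarrow>
        (\<forall>u v. E u v \<longrightarrow> (\<exists>i<N. u \<in> S' i \<and> v \<in> S' i)) \<and>
        (\<forall>u v. \<not> dag_adj D u v \<and> E u v \<longrightarrow>
            (\<exists>i<N. u \<in> S' i \<and> v \<in> S' i \<and> A (S' i) u v = None)) \<and>
        (\<forall>u v w. D u v \<and> D w v \<and> u \<noteq> w \<and> \<not> dag_adj D u w \<longrightarrow>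
            (\<exists>i<N. u \<in> S' i \<and> v \<in> S' i \<and> w \<in> S' i)))"

end

theory Submission
  imports Defs
begin

text \<open>
  Every neighbour of a vertex x of S lies in the expansion S', so on an inducing path relative to
  V - S' starting at x the second vertex is observed, hence a collider and an ancestor of an
  endpoint; acyclicity then forces x to be a proper ancestor of the other endpoint. Given
  G-adjacent but G*-nonadjacent u and v, pick blocks with u in S i and v in S j. If u and v stayed
  adjacent in the latent MAGs of both S' i and S' j, u would be a proper ancestor of v and v one
  of u, a directed cycle. Edges and unshielded colliders are covered by the expansion of a block
  containing an endpoint, respectively the collider.
\<close>

lemma dag_adj_commute: "dag_adj D u v \<longleftrightarrow> dag_adj D v u"
  unfolding dag_adj_def by blast

lemma is_path_rev:
  assumes sym: "\<And>x y. adj x y \<Longrightarrow> adj y x" and "is_path adj u v p"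
  shows "is_path adj v u (rev p)"
proof -
  have p: "length p \<ge> 2" "distinct p" "hd p = u" "last p = v"
    and step: "\<And>i. Suc i < length p \<Longrightarrow> adj (p ! i) (p ! Suc i)"
    using assms(2) unfolding is_path_def by auto
  have "adj (rev p ! i) (rev p ! Suc i)" if "Suc i < length p" for i
  proof -
    have "adj (p ! (length p - Suc (Suc i))) (p ! Suc (length p - Suc (Suc i)))"
      using step that by simp
    moreover have "Suc (length p - Suc (Suc i)) = length p - Suc i"
      using that by simp
    ultimately show ?thesis
      using that sym by (simp add: rev_nth)
  qed
  then show ?thesis
    using p unfolding is_path_def by (simp add: hd_rev last_rev)
qed

lemma dag_collider_rev:
  assumes "0 < i" "Suc i < length p"
  shows "dag_collider D (rev p) i \<longleftrightarrow> dag_collider D p (length p - Suc i)"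
proof -
  have "length p - Suc (i - 1) = Suc (length p - Suc i)" "length p - Suc (Suc i) = length p - Suc i - 1"
    using assms by auto
  then show ?thesis
    using assms unfolding dag_collider_def by (auto simp: rev_nth)
qed

lemma dag_inducing_path_rev:
  assumes "dag_inducing_path V D L u v p"
  shows "dag_inducing_path V D L v u (rev p)"
proof -
  have "dag_collider D (rev p) i \<and> (dag_anc D (rev p ! i) v \<or> dag_anc D (rev p ! i) u)"
    if i: "0 < i" "Suc i < length p" and "rev p ! i \<notin> L" for i
  proof -
    let ?k = "length p - Suc i"
    have "p ! ?k \<notin> L" "0 < ?k" "Suc ?k < length p"
      using that by (auto simp: rev_nth)
    then have "dag_collider D p ?k \<and> (dag_anc D (p ! ?k) u \<or> dag_anc D (p ! ?k) v)"
      using assms unfolding dag_inducing_path_def by blast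
    then show ?thesis
      using i by (auto simp: dag_collider_rev rev_nth)
  qed
  moreover have "is_path (dag_adj D) v u (rev p)"
    using assms is_path_rev dag_adj_commute unfolding dag_inducing_path_def by metis
  ultimately show ?thesis
    using assms unfolding dag_inducing_path_def by simp
qed

lemma dag_not_tranclp_self:
  assumes "dag V D"
  shows "\<not> D\<^sup>+\<^sup>+ u u"
  using assms unfolding dag_def by blast

lemma dag_inducing_path_tranclp:
  assumes dag: "dag V D" and nadj: "\<not> dag_adj D u v"
    and ip: "dag_inducing_path V D L u v p"
    and observed: "\<And>x. dag_adj D u x \<Longrightarrow> x \<notin> L"
  shows "D\<^sup>+\<^sup>+ u v"
proof -
  have path: "is_path (dag_adj D) u v p"
    and collider: "\<And>i. 0 < i \<Longrightarrow> Suc i < length p \<Longrightarrow> p ! i \<notin> L \<Longrightarrow>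
        dag_collider D p i \<and> (dag_anc D (p ! i) u \<or> dag_anc D (p ! i) v)"
    using ip unfolding dag_inducing_path_def by auto
  have "length p \<ge> 2" "hd p = u" "last p = v"
    and step: "\<And>i. Suc i < length p \<Longrightarrow> dag_adj D (p ! i) (p ! Suc i)"
    using path unfolding is_path_def by auto
  moreover have "p \<noteq> []"
    using \<open>length p \<ge> 2\<close> by auto
  ultimately have p0: "p ! 0 = u" and "p ! (length p - 1) = v"
    by (simp_all add: hd_conv_nth last_conv_nth)
  then have "length p \<noteq> 2"
    using step[of 0] nadj by auto
  with \<open>length p \<ge> 2\<close> have "Suc 1 < length p"
    by simp
  moreover have "p ! 1 \<notin> L"
    using observed step[of 0] p0 \<open>Suc 1 < length p\<close> by simp
  ultimately have "dag_collider D p 1" and anc: "dag_anc D (p ! 1) u \<or> dag_anc D (p ! 1) v"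
    using collider[of 1] by auto
  then have edge: "D u (p ! 1)"
    using p0 unfolding dag_collider_def by simp
  have "\<not> dag_anc D (p ! 1) u"
    using edge dag_not_tranclp_self[OF dag, of u] rtranclp_into_tranclp2[of D u "p ! 1" u]
    unfolding dag_anc_def by blast
  with anc edge show ?thesis
    unfolding dag_anc_def by (blast intro: rtranclp_into_tranclp2)
qed

lemma neighbour_in_expansion:
  assumes "superstructure V E D" "u \<in> S" "E u x"
  shows "x \<in> S \<union> out_boundary V E S"
  using assms unfolding superstructure_def out_boundary_def by blast

lemma expansion_inducing_path_tranclp:
  assumes dag: "dag V D" and ss: "superstructure V E D" and nadj: "\<not> dag_adj D u v"
    and "u \<in> S"
    and ip: "dag_inducing_path V D (V - (S \<union> out_boundary V E S)) u v p"
  shows "D\<^sup>+\<^sup>+ u v"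
proof (rule dag_inducing_path_tranclp[OF dag nadj ip])
  fix x assume "dag_adj D u x"
  then have "E u x"
    using ss unfolding superstructure_def by blast
  then show "x \<notin> V - (S \<union> out_boundary V E S)"
    using neighbour_in_expansion[OF ss \<open>u \<in> S\<close>] by blast
qed

lemma pag_eq_None_iff: "pag S M u v = None \<longleftrightarrow> M u v = None"
  unfolding pag_def by (auto split: option.splits)

lemma latent_mag_adjacent_imp_inducing_path:
  assumes "latent_mag V D S u v \<noteq> None"
  obtains p where "dag_inducing_path V D (V - S) u v p"
  using assms unfolding latent_mag_def by (auto split: if_splits)

lemma expansion_contains_neighbourhood:
  assumes ss: "superstructure V E D" and cover: "(\<Union>i<N. S i) = V" and "u \<in> V"
  obtains i where "i < N" "u \<in> S i" "\<And>x. E u x \<Longrightarrow> x \<in> S i \<union> out_boundary V E (S i)"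
proof -
  obtain i where "i < N" "u \<in> S i"
    using cover \<open>u \<in> V\<close> by blast
  then show ?thesis
    using that neighbour_in_expansion[OF ss] by blast
qed

lemma expansion_separates_nonadjacent:
  assumes dag: "dag V D" and ss: "superstructure V E D"
    and A: "consistent_pag_learner V D A"
    and sub: "\<forall>i<N. S i \<subseteq> V" and cover: "(\<Union>i<N. S i) = V"
    and nadj: "\<not> dag_adj D u v" and "E u v"
  shows "\<exists>i<N. u \<in> S i \<union> out_boundary V E (S i) \<and> v \<in> S i \<union> out_boundary V E (S i) \<and>
    A (S i \<union> out_boundary V E (S i)) u v = None"
proof (rule ccontr)
  let ?S' = "\<lambda>i. S i \<union> out_boundary V E (S i)"
  assume separated_nowhere: "\<not> ?thesis"
  have inducing_path: "\<exists>p. dag_inducing_path V D (V - ?S' i) u v p"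
    if "i < N" "u \<in> ?S' i" "v \<in> ?S' i" for i
  proof -
    have "?S' i \<subseteq> V"
      using sub \<open>i < N\<close> unfolding out_boundary_def by blast
    then have "A (?S' i) = pag (?S' i) (latent_mag V D (?S' i))"
      using A unfolding consistent_pag_learner_def by blast
    moreover have "A (?S' i) u v \<noteq> None"
      using separated_nowhere that by auto
    ultimately have "latent_mag V D (?S' i) u v \<noteq> None"
      by (simp add: pag_eq_None_iff)
    then show ?thesis
      by (rule latent_mag_adjacent_imp_inducing_path) blast
  qed
  have "E v u" "u \<in> V" "v \<in> V"
    using ss \<open>E u v\<close> unfolding superstructure_def by blast+
  obtain i where "i < N" "u \<in> S i" "v \<in> ?S' i"
    using expansion_contains_neighbourhood[OF ss cover \<open>u \<in> V\<close>] \<open>E u v\<close> by metis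
  then obtain p where "dag_inducing_path V D (V - ?S' i) u v p"
    using inducing_path by blast
  then have "D\<^sup>+\<^sup>+ u v"
    using expansion_inducing_path_tranclp[OF dag ss nadj \<open>u \<in> S i\<close>] by blast
  obtain j where "j < N" "v \<in> S j" "u \<in> ?S' j"
    using expansion_contains_neighbourhood[OF ss cover \<open>v \<in> V\<close>] \<open>E v u\<close> by metis
  then obtain q where "dag_inducing_path V D (V - ?S' j) u v q"
    using inducing_path by blast
  then have "D\<^sup>+\<^sup>+ v u"
    using expansion_inducing_path_tranclp[OF dag ss _ \<open>v \<in> S j\<close> dag_inducing_path_rev] nadj
    by (simp add: dag_adj_commute)
  with \<open>D\<^sup>+\<^sup>+ u v\<close> show False
    using dag_not_tranclp_self[OF dag] by (meson tranclp_trans)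
qed

theorem lemma2:
  fixes V :: "'v set" and D E :: "'v \<Rightarrow> 'v \<Rightarrow> bool"
    and N :: nat and S :: "nat \<Rightarrow> 'v set"
  assumes "dag V D"
    and "superstructure V E D"
    and "\<forall>i<N. S i \<subseteq> V"
    and "(\<Union>i<N. S i) = V"
  shows "causal_partition V E D N (\<lambda>i. S i \<union> out_boundary V E (S i))"
  unfolding causal_partition_def
proof (intro allI impI conjI)
  fix A assume A: "consistent_pag_learner V D A"
  have E_in_V: "\<And>u v. E u v \<Longrightarrow> u \<in> V"
    and adj_E: "\<And>u v. dag_adj D u v \<Longrightarrow> E u v"
    using assms(2) unfolding superstructure_def by blast+
  note neighbourhood = expansion_contains_neighbourhood[OF assms(2) assms(4)]
  show "\<exists>i<N. u \<in> S i \<union> out_boundary V E (S i) \<and> v \<in> S i \<union> out_boundary V E (S i)"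
    if "E u v" for u v
    using neighbourhood[OF E_in_V[OF \<open>E u v\<close>]] \<open>E u v\<close> by (metis UnI1)
  show "\<exists>i<N. u \<in> S i \<union> out_boundary V E (S i) \<and> v \<in> S i \<union> out_boundary V E (S i) \<and>
      A (S i \<union> out_boundary V E (S i)) u v = None"
    if "\<not> dag_adj D u v \<and> E u v" for u v
    using expansion_separates_nonadjacent[OF assms(1,2) A assms(3,4)] that by blast
  show "\<exists>i<N. u \<in> S i \<union> out_boundary V E (S i) \<and> v \<in> S i \<union> out_boundary V E (S i) \<and>
      w \<in> S i \<union> out_boundary V E (S i)"
    if "D u v \<and> D w v \<and> u \<noteq> w \<and> \<not> dag_adj D u w" for u v w
  proof -
    have "E v u" "E v w"
      using that adj_E unfolding dag_adj_def by blast+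
    then show ?thesis
      using neighbourhood[OF E_in_V[OF \<open>E v u\<close>]] by (metis UnI1)
  qed
qed

end
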